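(* Let $V$ be smooth with compact support in $[1,2]$, $X\ge2$, and $r$ a nonzero integer with $|r|\le 3X^2$. For each positive divisor $l$ of $r$ put $r_1=r/l$, and for positive integers $a,c$ put \[ \widehat{V_{a,c}}(0)=\int_{\mathbb{R}}V\!\left(\frac tX\right)V\!\left(\frac{r_1+tc}{aX}\right)dt . \] Define \[ M_V(X,r)=\sum_{l\mid r}\ \sum_{\substack{a_1,c_1\ge1\\ (a_1,c_1)=1}}\frac1{a_1}V\!\left(\frac{la_1}{X}\right)V\!\left(\frac{lc_1}{X}\right)\widehat{V_{a_1,c_1}}(0). \] Then for every $\varepsilon>0$, \[ M_V(X,r)=\sum_{l\mid r}\sum_{k\ge1}\frac{\mu(k)}{k}\iiint_{\mathbb{R}^3}\frac1z V\!\left(\frac xX\right)V\!\left(\frac{lky}{X}\right)V\!\left(\frac{lkz}{X}\right)V\!\left(\frac{r+lkxy}{zlkX}\right)dx\,dy\,dz+O_{\varepsilon,V}\big(\tau(|r|)X^{1+\varepsilon}\big), \] where $\tau$ is the divisor function and $l$ runs over positive divisors of $r$. *)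

theory Defs
  imports "HOL-Analysis.Analysis" "HOL-Computational_Algebra.Squarefree"
begin

definition moebius_mu :: "nat \<Rightarrow> real" where
  "moebius_mu n = (if n = 0 then 0 else if squarefree n then (-1) ^ card (prime_factors n) else 0)"

definition divisor_tau :: "nat \<Rightarrow> nat" where
  "divisor_tau n = card {d. d dvd n}"

definition smooth_fun :: "(real \<Rightarrow> real) \<Rightarrow> bool" where
  "smooth_fun V \<longleftrightarrow> (\<forall>n. ((deriv ^^ n) V) differentiable_on UNIV)"

definition pos_divisors :: "int \<Rightarrow> nat set" where
  "pos_divisors r = {l. 0 < l \<and> int l dvd r}"

definition Vhat0 :: "(real \<Rightarrow> real) \<Rightarrow> real \<Rightarrow> int \<Rightarrow> nat \<Rightarrow> nat \<Rightarrow> real" where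
  "Vhat0 V X r1 a c = (\<integral>t. V (t / X) * V ((real_of_int r1 + t * real c) / (real a * X)) \<partial>lborel)"

definition M_V :: "(real \<Rightarrow> real) \<Rightarrow> real \<Rightarrow> int \<Rightarrow> real" where
  "M_V V X r = (\<Sum>l\<in>pos_divisors r.
     \<Sum>\<^sub>\<infinity>(a, c)\<in>{(a, c). 1 \<le> a \<and> 1 \<le> c \<and> coprime a c}.
        (1 / real a) * V (real l * real a / X) * V (real l * real c / X)
        * Vhat0 V X (r div int l) a c)"

definition main_integral :: "(real \<Rightarrow> real) \<Rightarrow> real \<Rightarrow> int \<Rightarrow> nat \<Rightarrow> nat \<Rightarrow> real" where
  "main_integral V X r l k = (\<integral>(x, y, z). (1 / z) * V (x / X) * V (real l * real k * y / X)
       * V (real l * real k * z / X)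
       * V ((real_of_int r + real l * real k * x * y) / (z * real l * real k * X)) \<partial>(lborel :: (real \<times> real \<times> real) measure))"

definition main_term :: "(real \<Rightarrow> real) \<Rightarrow> real \<Rightarrow> int \<Rightarrow> real" where
  "main_term V X r = (\<Sum>l\<in>pos_divisors r.
     \<Sum>\<^sub>\<infinity>k\<in>{k::nat. 1 \<le> k}. moebius_mu k / real k * main_integral V X r l k)"

end

(* Fix a positive divisor l of r and put r1 = r / l. For a >= X / l the (a, c)-term of M_V(X, r) is
   the integral over x of psi(a, c, x) = V(l a / X) V(l c / X) V(x / X) V((r1 + x c) / (a X)) / a.
   Moebius inversion removes the coprimality condition, turning the sum over coprime (a, c) into
   sum_k mu(k) sum_(a, c) int psi(k a, k c, x) dx, where only k <= 2 X / l contribute.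
   For fixed k and x, the function (z, y) |-> psi(k z, k y, x) is Lipschitz with constant O(k (l / X)^2)
   in each variable and supported on a square of side X / (l k) >= 1/2, so its lattice sum differs from
   its double integral by O(1 / k); moreover k times the triple integral of psi(k z, k y, x) is exactly
   the triple integral of the main term. Integrating over x in [X, 2 X] and summing over k <= 2 X / l
   costs O(X log X) = O(X^(1 + eps)), and the main-term integrals for k > 2 X / l are O(X^2 / (l k^2)),
   whose tail is O(X). Summing over the tau(|r|) divisors l gives the bound. *)

theory Submission
  imports Defs
begin

section \<open>Bounded Lipschitz functions\<close>

lemma bounded_if_vanishing_outside_compact:
  fixes g :: "'a::topological_space \<Rightarrow> 'b::real_normed_vector"
  assumes "compact S" "continuous_on S g" "\<And>x. x \<notin> S \<Longrightarrow> g x = 0"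
  obtains B where "0 \<le> B" "\<And>x. norm (g x) \<le> B"
proof -
  obtain B where "0 < B" "\<forall>y\<in>g ` S. norm y \<le> B"
    using assms(1,2) compact_continuous_image compact_imp_bounded bounded_pos by metis
  with assms(3) show thesis
    by (metis image_eqI less_imp_le norm_zero that)
qed

lemma smooth_compact_support_bounded_lipschitz:
  fixes V :: "real \<Rightarrow> real"
  assumes smooth: "smooth_fun V" and vanish: "\<And>t. t \<notin> {a..b} \<Longrightarrow> V t = 0"
  obtains A where "1 \<le> A" "\<And>t. \<bar>V t\<bar> \<le> A" "A-lipschitz_on UNIV V"
proof -
  have "(deriv ^^ 0) V differentiable_on UNIV" "(deriv ^^ Suc 0) V differentiable_on UNIV"
    using smooth unfolding smooth_fun_def by blast+
  then have has_deriv: "\<And>t. (V has_real_derivative deriv V t) (at t)"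
    and cont: "continuous_on UNIV V" "continuous_on UNIV (deriv V)"
    by (auto simp: DERIV_deriv_iff_real_differentiable differentiable_on_def
        intro: differentiable_imp_continuous_on)
  have deriv_vanish: "deriv V t = 0" if "t \<notin> {a..b}" for t
  proof -
    have "eventually (\<lambda>s. s \<in> - {a..b}) (nhds t)"
      using that by (intro eventually_nhds_in_open) auto
    then have "eventually (\<lambda>s. V s = 0) (nhds t)"
      by eventually_elim (use vanish in auto)
    then have "deriv V t = deriv (\<lambda>_. 0) t" by (rule deriv_cong_ev) simp
    then show ?thesis by simp
  qed
  obtain B where B: "\<And>t. norm (V t) \<le> B"
    using bounded_if_vanishing_outside_compact[of "{a..b}" V] cont(1) vanish
    by (metis compact_Icc continuous_on_subset subset_UNIV)
  obtain L where L: "\<And>t. norm (deriv V t) \<le> L"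
    using bounded_if_vanishing_outside_compact[of "{a..b}" "deriv V"] cont(2) deriv_vanish
    by (metis compact_Icc continuous_on_subset subset_UNIV)
  define A where "A = max 1 (max B L)"
  have "A-lipschitz_on UNIV V"
  proof (rule lipschitz_onI)
    fix s t :: real
    have "norm (V s - V t) \<le> A * norm (s - t)"
      using has_deriv L by (intro field_differentiable_bound[of UNIV])
        (auto simp: A_def intro: has_field_derivative_at_within le_max_iff_disj[THEN iffD2])
    then show "dist (V s) (V t) \<le> A * dist s t" by (simp add: dist_norm)
  qed (simp add: A_def)
  moreover have "\<bar>V t\<bar> \<le> A" for t using B[of t] by (simp add: A_def)
  ultimately show thesis by (intro that) (auto simp: A_def)
qed

lemma lipschitz_on_mult_bounded:
  fixes f g :: "'a::metric_space \<Rightarrow> real"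
  assumes lip: "Lf-lipschitz_on UNIV f" "Lg-lipschitz_on UNIV g"
    and bound: "\<And>x. \<bar>f x\<bar> \<le> Bf" "\<And>x. \<bar>g x\<bar> \<le> Bg"
  shows "(Lf * Bg + Bf * Lg)-lipschitz_on UNIV (\<lambda>x. f x * g x)"
proof (rule lipschitz_onI)
  fix x y :: 'a
  have "f x * g x - f y * g y = (f x - f y) * g x + f y * (g x - g y)" by algebra
  then have "\<bar>f x * g x - f y * g y\<bar> \<le> \<bar>f x - f y\<bar> * \<bar>g x\<bar> + \<bar>f y\<bar> * \<bar>g x - g y\<bar>"
    by (metis abs_mult abs_triangle_ineq)
  also have "\<dots> \<le> (Lf * dist x y) * Bg + Bf * (Lg * dist x y)"
    using lipschitz_onD[OF lip(1), of x y] lipschitz_onD[OF lip(2), of x y] bound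
    by (intro add_mono mult_mono) (auto simp: dist_real_def intro: order_trans[OF abs_ge_zero])
  finally show "dist (f x * g x) (f y * g y) \<le> (Lf * Bg + Bf * Lg) * dist x y"
    by (simp add: dist_real_def algebra_simps)
next
  show "0 \<le> Lf * Bg + Bf * Lg"
    using lipschitz_on_nonneg[OF lip(1)] lipschitz_on_nonneg[OF lip(2)]
      order_trans[OF abs_ge_zero bound(1)] order_trans[OF abs_ge_zero bound(2)]
    by simp
qed

lemma lipschitz_on_affine_real: "\<bar>s\<bar>-lipschitz_on UNIV (\<lambda>t::real. b + s * t)"
  by (rule lipschitz_onI) (auto simp: dist_real_def abs_mult[symmetric] right_diff_distrib[symmetric])

section \<open>Lattice sums of Lipschitz functions\<close>

lemma card_nat_interval_le:
  fixes \<alpha> \<beta> :: real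
  assumes "\<alpha> \<le> \<beta> + 1"
  shows "real (card {n::nat. \<alpha> \<le> real n \<and> real n \<le> \<beta>}) \<le> \<beta> - \<alpha> + 1"
proof (cases "\<beta> < 0")
  case True
  then have empty: "{n::nat. \<alpha> \<le> real n \<and> real n \<le> \<beta>} = {}" by auto
  show ?thesis unfolding empty using assms by simp
next
  case False
  have "{n::nat. \<alpha> \<le> real n \<and> real n \<le> \<beta>} \<subseteq> {nat \<lceil>\<alpha>\<rceil>..nat \<lfloor>\<beta>\<rfloor>}"
    by (auto simp: le_nat_iff nat_le_iff ceiling_le_iff le_floor_iff)
  then have "card {n::nat. \<alpha> \<le> real n \<and> real n \<le> \<beta>} \<le> card {nat \<lceil>\<alpha>\<rceil>..nat \<lfloor>\<beta>\<rfloor>}"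
    by (intro card_mono) auto
  then have "real (card {n::nat. \<alpha> \<le> real n \<and> real n \<le> \<beta>}) \<le> real (nat \<lfloor>\<beta>\<rfloor> + 1 - nat \<lceil>\<alpha>\<rceil>)"
    by simp
  also have "\<dots> \<le> \<beta> - \<alpha> + 1"
  proof (cases "nat \<lceil>\<alpha>\<rceil> \<le> nat \<lfloor>\<beta>\<rfloor> + 1")
    case True
    have "real (nat \<lfloor>\<beta>\<rfloor>) \<le> \<beta>" "\<alpha> \<le> real (nat \<lceil>\<alpha>\<rceil>)"
      using False real_nat_ceiling_ge by auto
    with True show ?thesis by (simp add: of_nat_diff)
  next
    case False
    then have "nat \<lfloor>\<beta>\<rfloor> + 1 - nat \<lceil>\<alpha>\<rceil> = 0" by arith
    then show ?thesis using assms by simp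
  qed
  finally show ?thesis .
qed

lemma integrable_continuous_vanishing_outside_compact:
  fixes f :: "'a::euclidean_space \<Rightarrow> real"
  assumes "continuous_on UNIV f" "compact S" "\<And>x. x \<notin> S \<Longrightarrow> f x = 0"
  shows "integrable lborel f"
proof -
  have "integrable lborel (\<lambda>x. indicator S x *\<^sub>R f x)"
    using assms(1,2) by (intro borel_integrable_compact) (auto intro: continuous_on_subset)
  moreover have "(\<lambda>x. indicator S x *\<^sub>R f x) = f"
    using assms(3) by (auto simp: indicator_def fun_eq_iff)
  ultimately show ?thesis by simp
qed

lemma abs_integral_le_indicator_bound:
  fixes f :: "real \<Rightarrow> real"
  assumes bound: "\<And>t. \<bar>f t\<bar> \<le> K * indicator {\<alpha>..\<beta>} t" and "\<alpha> \<le> \<beta>"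
  shows "\<bar>\<integral>t. f t \<partial>lborel\<bar> \<le> K * (\<beta> - \<alpha>)"
proof (cases "integrable lborel f")
  case True
  have "integrable lborel (\<lambda>t. K * indicator {\<alpha>..\<beta>} t :: real)"
    by (intro integrable_mult_right) (simp add: integrable_indicator_iff emeasure_lborel_Icc_eq)
  then have "\<bar>\<integral>t. f t \<partial>lborel\<bar> \<le> (\<integral>t. K * indicator {\<alpha>..\<beta>} t \<partial>lborel)"
    using True bound by (intro integral_abs_bound_integral) auto
  then show ?thesis using assms(2) by simp
next
  case False
  have "0 \<le> K" using bound[of \<alpha>] assms(2) by (auto intro: order_trans[OF abs_ge_zero])
  with False show ?thesis using assms(2) by (simp add: not_integrable_integral_eq)
qed

lemma integral_lborel_pair_iterated:
  fixes f :: "'a::euclidean_space \<times> 'b::euclidean_space \<Rightarrow> real"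
  assumes "integrable lborel f"
  shows "(\<integral>p. f p \<partial>lborel) = (\<integral>x. (\<integral>y. f (x, y) \<partial>lborel) \<partial>lborel)"
    and "integrable lborel (\<lambda>x. \<integral>y. f (x, y) \<partial>lborel)"
proof -
  have f: "integrable (lborel \<Otimes>\<^sub>M lborel) f" using assms by (simp add: lborel_prod)
  show "(\<integral>p. f p \<partial>lborel) = (\<integral>x. (\<integral>y. f (x, y) \<partial>lborel) \<partial>lborel)"
    using lborel_pair.integral_fst'[OF f] by (simp add: lborel_prod)
  show "integrable lborel (\<lambda>x. \<integral>y. f (x, y) \<partial>lborel)"
    using lborel_pair.integrable_fst'[OF f] by simp
qed

lemma integral_nat_interval_split:
  fixes f :: "real \<Rightarrow> real"
  assumes "continuous_on UNIV f"
  shows "integral {0..real n} f = (\<Sum>k<n. integral {real k..real k + 1} f)"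
proof (induction n)
  case (Suc n)
  have "f integrable_on {0..real n + 1}"
    using assms by (intro integrable_continuous_interval) (auto intro: continuous_on_subset)
  then have "integral {0..real n + 1} f = integral {0..real n} f + integral {real n..real n + 1} f"
    by (intro Henstock_Kurzweil_Integration.integral_combine[symmetric]) simp_all
  then show ?case using Suc by (simp add: add.commute)
qed simp

lemma lipschitz_unit_interval_integral_error:
  fixes f :: "real \<Rightarrow> real"
  assumes lip: "L-lipschitz_on UNIV f"
  shows "\<bar>f (t + 1) - integral {t..t + 1} f\<bar> \<le> L"
proof -
  have cont: "continuous_on {t..t + 1} f"
    using lipschitz_on_continuous_on[OF lip] by (rule continuous_on_subset) simp
  have "f (t + 1) - integral {t..t + 1} f = integral {t..t + 1} (\<lambda>s. f (t + 1) - f s)"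
    using cont by (simp add: integral_diff integrable_continuous_interval)
  also have "\<bar>\<dots>\<bar> \<le> L * Henstock_Kurzweil_Integration.content (cbox t (t + 1))"
  proof -
    have "norm (integral (cbox t (t + 1)) (\<lambda>s. f (t + 1) - f s)) \<le> L * Henstock_Kurzweil_Integration.content (cbox t (t + 1))"
    proof (rule integrable_bound[OF lipschitz_on_nonneg[OF lip]])
      show "(\<lambda>s. f (t + 1) - f s) integrable_on cbox t (t + 1)"
        using cont by (auto intro!: integrable_continuous_interval continuous_intros)
      fix s assume "s \<in> cbox t (t + 1)"
      then have "L * dist (t + 1) s \<le> L" using lipschitz_on_nonneg[OF lip]
        by (auto simp: dist_real_def intro: mult_left_le)
      then show "norm (f (t + 1) - f s) \<le> L"
        using lipschitz_onD[OF lip, of "t + 1" s] by (simp add: dist_real_def)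
    qed
    then show ?thesis by simp
  qed
  finally show ?thesis by simp
qed

lemma sum_indicator_nat_interval_le:
  fixes F :: "nat set"
  assumes "finite F" "0 \<le> B" "\<alpha> \<le> \<beta> + 1"
  shows "(\<Sum>k\<in>F. if \<alpha> \<le> real k \<and> real k \<le> \<beta> then B else 0) \<le> B * (\<beta> - \<alpha> + 1)"
proof -
  define S where "S = {k::nat. \<alpha> \<le> real k \<and> real k \<le> \<beta>}"
  have "S \<subseteq> {..nat \<lceil>\<beta>\<rceil>}"
  proof
    fix k assume "k \<in> S"
    then have "real k \<le> \<beta>" unfolding S_def by simp
    then have "real k \<le> real (nat \<lceil>\<beta>\<rceil>)" using real_nat_ceiling_ge[of \<beta>] by linarith
    then show "k \<in> {..nat \<lceil>\<beta>\<rceil>}" by simp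
  qed
  then have "card (F \<inter> S) \<le> card S" by (intro card_mono) (auto intro: finite_subset)
  then have "B * real (card (F \<inter> S)) \<le> B * (\<beta> - \<alpha> + 1)"
    using card_nat_interval_le[OF assms(3)] assms(2) unfolding S_def
    by (intro mult_left_mono) auto
  then show ?thesis
    unfolding S_def by (simp add: sum.If_cases[OF assms(1)] Int_def mult.commute)
qed

lemma lipschitz_sum_integral_error:
  fixes f :: "real \<Rightarrow> real" and N :: nat
  assumes lip: "L-lipschitz_on UNIV f"
    and vanish: "\<And>t. t \<notin> {\<alpha>..\<beta>} \<Longrightarrow> f t = 0"
    and "0 < \<alpha>" "\<alpha> \<le> \<beta>" "\<beta> < real N + 1"
  shows "\<bar>(\<Sum>n=1..N. f (real n)) - (\<integral>t. f t \<partial>lborel)\<bar> \<le> L * (\<beta> - \<alpha> + 2)"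
proof -
  have cont: "continuous_on UNIV f" by (rule lipschitz_on_continuous_on[OF lip])
  have "integrable lborel f"
    using cont vanish by (intro integrable_continuous_vanishing_outside_compact[of _ "{\<alpha>..\<beta>}"]) auto
  then have "(\<integral>t. f t \<partial>lborel) = integral UNIV (\<lambda>t. if t \<in> {0..real (Suc N)} then f t else 0)"
    using vanish assms(3-5) by (subst integral_lborel[symmetric]) (auto intro!: integral_cong)
  also have "\<dots> = (\<Sum>k<Suc N. integral {real k..real k + 1} f)"
    using integral_nat_interval_split[OF cont] by (simp only: integral_restrict_UNIV)
  finally have integral_eq: "(\<integral>t. f t \<partial>lborel) = (\<Sum>k<Suc N. integral {real k..real k + 1} f)" .
  have "f (real N + 1) = 0" using vanish assms(5) by simp
  then have sum_eq: "(\<Sum>n=1..N. f (real n)) = (\<Sum>k<Suc N. f (real k + 1))"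
    by (simp add: sum.atLeast1_atMost_eq add.commute)
  have term_bound: "\<bar>f (real k + 1) - integral {real k..real k + 1} f\<bar>
      \<le> (if \<alpha> - 1 \<le> real k \<and> real k \<le> \<beta> then L else 0)" for k
  proof (cases "\<alpha> - 1 \<le> real k \<and> real k \<le> \<beta>")
    case False
    then have vanish_k: "\<forall>t\<in>{real k..real k + 1}. f t = 0" using vanish by force
    then have "integral {real k..real k + 1} f = integral {real k..real k + 1} (\<lambda>_. 0)"
      by (intro integral_cong) auto
    with False vanish_k show ?thesis by auto
  qed (simp add: lipschitz_unit_interval_integral_error[OF lip])
  have "\<bar>(\<Sum>n=1..N. f (real n)) - (\<integral>t. f t \<partial>lborel)\<bar>
      \<le> (\<Sum>k<Suc N. \<bar>f (real k + 1) - integral {real k..real k + 1} f\<bar>)"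
    unfolding sum_eq integral_eq sum_subtractf[symmetric] by (rule sum_abs)
  also have "\<dots> \<le> (\<Sum>k<Suc N. if \<alpha> - 1 \<le> real k \<and> real k \<le> \<beta> then L else 0)"
    by (intro sum_mono term_bound)
  also have "\<dots> \<le> L * (\<beta> - (\<alpha> - 1) + 1)"
    using lipschitz_on_nonneg[OF lip] assms(4) by (intro sum_indicator_nat_interval_le) auto
  finally show ?thesis by (simp add: algebra_simps)
qed

lemma lipschitz_on_integral_parameter:
  fixes g :: "real \<Rightarrow> real \<Rightarrow> real"
  assumes lip: "\<And>z. L-lipschitz_on UNIV (g z)"
    and integrable: "\<And>y. integrable lborel (\<lambda>z. g z y)"
    and vanish: "\<And>z y. z \<notin> {\<alpha>..\<beta>} \<Longrightarrow> g z y = 0" and "\<alpha> \<le> \<beta>"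
  shows "(L * (\<beta> - \<alpha>))-lipschitz_on UNIV (\<lambda>y. \<integral>z. g z y \<partial>lborel)"
proof (rule lipschitz_onI)
  fix s t :: real
  have "\<bar>\<integral>z. g z s - g z t \<partial>lborel\<bar> \<le> L * dist s t * (\<beta> - \<alpha>)"
  proof (rule abs_integral_le_indicator_bound[OF _ assms(4)])
    fix z
    show "\<bar>g z s - g z t\<bar> \<le> L * dist s t * indicator {\<alpha>..\<beta>} z"
      using lipschitz_onD[OF lip, of s t z] vanish[of z] by (auto simp: dist_real_def indicator_def)
  qed
  then show "dist (\<integral>z. g z s \<partial>lborel) (\<integral>z. g z t \<partial>lborel) \<le> L * (\<beta> - \<alpha>) * dist s t"
    using integrable by (simp add: dist_real_def mult_ac)
qed (use lipschitz_on_nonneg[OF lip] assms(4) in simp)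

lemma lipschitz_row_sums_integral_error:
  fixes g :: "real \<Rightarrow> real \<Rightarrow> real" and N :: nat
  assumes lip: "\<And>y. L-lipschitz_on UNIV (\<lambda>z. g z y)"
    and vanish: "\<And>z y. z \<notin> {\<alpha>..\<beta>} \<or> y \<notin> {\<alpha>..\<beta>} \<Longrightarrow> g z y = 0"
    and "0 < \<alpha>" "\<alpha> \<le> \<beta>" "\<beta> < real N + 1"
  shows "\<bar>\<Sum>c=1..N. (\<Sum>a=1..N. g (real a) (real c)) - (\<integral>z. g z (real c) \<partial>lborel)\<bar>
    \<le> L * (\<beta> - \<alpha> + 2) * (\<beta> - \<alpha> + 1)"
proof -
  have row: "\<bar>(\<Sum>a=1..N. g (real a) y) - (\<integral>z. g z y \<partial>lborel)\<bar>
      \<le> (if \<alpha> \<le> y \<and> y \<le> \<beta> then L * (\<beta> - \<alpha> + 2) else 0)" for y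
  proof (cases "\<alpha> \<le> y \<and> y \<le> \<beta>")
    case True
    have "\<bar>(\<Sum>a=1..N. g (real a) y) - (\<integral>z. g z y \<partial>lborel)\<bar> \<le> L * (\<beta> - \<alpha> + 2)"
      by (rule lipschitz_sum_integral_error[OF lip _ assms(3-5)]) (use vanish in auto)
    with True show ?thesis by simp
  next
    case False
    then have "g z y = 0" for z using vanish by auto
    with False show ?thesis by auto
  qed
  have "\<bar>\<Sum>c=1..N. (\<Sum>a=1..N. g (real a) (real c)) - (\<integral>z. g z (real c) \<partial>lborel)\<bar>
      \<le> (\<Sum>c=1..N. if \<alpha> \<le> real c \<and> real c \<le> \<beta> then L * (\<beta> - \<alpha> + 2) else 0)"
    by (rule order_trans[OF sum_abs sum_mono[OF row]])
  also have "\<dots> \<le> L * (\<beta> - \<alpha> + 2) * (\<beta> - \<alpha> + 1)"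
    using lipschitz_on_nonneg[OF lip] assms(4) by (intro sum_indicator_nat_interval_le) auto
  finally show ?thesis .
qed

lemma lipschitz_double_sum_integral_error:
  fixes g :: "real \<Rightarrow> real \<Rightarrow> real" and N :: nat
  assumes lip_z: "\<And>y. Lz-lipschitz_on UNIV (\<lambda>z. g z y)"
    and lip_y: "\<And>z. Ly-lipschitz_on UNIV (g z)"
    and vanish: "\<And>z y. z \<notin> {\<alpha>..\<beta>} \<or> y \<notin> {\<alpha>..\<beta>} \<Longrightarrow> g z y = 0"
    and "0 < \<alpha>" "1 / 2 \<le> \<beta> - \<alpha>" \<comment> \<open>only used to absorb lower-order terms into \<open>(\<beta> - \<alpha>)\<^sup>2\<close>\<close>
    and "\<beta> < real N + 1"
  shows "\<bar>(\<Sum>a=1..N. \<Sum>c=1..N. g (real a) (real c)) - (\<integral>y. (\<integral>z. g z y \<partial>lborel) \<partial>lborel)\<bar>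
    \<le> (15 * Lz + 5 * Ly) * (\<beta> - \<alpha>)\<^sup>2"
proof -
  define h where "h y = (\<integral>z. g z y \<partial>lborel)" for y
  define w where "w = \<beta> - \<alpha>"
  have "\<alpha> \<le> \<beta>" using assms(5) by simp
  note bounds = assms(4) this assms(6)
  have rows: "\<bar>\<Sum>c=1..N. (\<Sum>a=1..N. g (real a) (real c)) - h (real c)\<bar> \<le> Lz * (w + 2) * (w + 1)"
    unfolding h_def w_def by (rule lipschitz_row_sums_integral_error[OF lip_z vanish bounds])
  have "integrable lborel (\<lambda>z. g z y)" for y
    using lipschitz_on_continuous_on[OF lip_z] vanish
    by (intro integrable_continuous_vanishing_outside_compact[of _ "{\<alpha>..\<beta>}"]) auto
  then have "(Ly * w)-lipschitz_on UNIV h"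
    unfolding h_def w_def using vanish bounds by (intro lipschitz_on_integral_parameter[OF lip_y]) auto
  moreover have "h y = 0" if "y \<notin> {\<alpha>..\<beta>}" for y
    using vanish that unfolding h_def by simp
  ultimately have columns: "\<bar>(\<Sum>c=1..N. h (real c)) - (\<integral>y. h y \<partial>lborel)\<bar> \<le> Ly * w * (w + 2)"
    using lipschitz_sum_integral_error[OF _ _ bounds] unfolding w_def by blast
  have "Lz * (w + 2) * (w + 1) + Ly * w * (w + 2) \<le> Lz * (5 * w * (3 * w)) + Ly * (w * (5 * w))"
    using assms(5) lipschitz_on_nonneg[OF lip_z] lipschitz_on_nonneg[OF lip_y] unfolding w_def
    by (intro add_mono) (simp_all add: mult.assoc mult_left_mono mult_mono)
  moreover have "(\<Sum>a=1..N. \<Sum>c=1..N. g (real a) (real c)) - (\<integral>y. h y \<partial>lborel)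
      = (\<Sum>c=1..N. (\<Sum>a=1..N. g (real a) (real c)) - h (real c))
        + ((\<Sum>c=1..N. h (real c)) - (\<integral>y. h y \<partial>lborel))"
    by (subst sum.swap) (simp add: sum_subtractf)
  ultimately show ?thesis
    using rows columns unfolding h_def w_def by (simp add: power2_eq_square algebra_simps)
qed

section \<open>The Moebius function\<close>

lemma moebius_mu_prime_mult:
  assumes p: "prime p" and "\<not> p dvd e" and "e > 0"
  shows "moebius_mu (p * e) = - moebius_mu e"
proof -
  have coprime: "coprime p e" using assms by (simp add: prime_imp_coprime)
  have "squarefree p" using p by (simp add: squarefree_prime_elem)
  then have "squarefree (p * e) \<longleftrightarrow> squarefree e"
    using coprime squarefree_mult_coprime squarefree_multD(2) by blast
  moreover have "prime_factors (p * e) = insert p (prime_factors e)"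
    using assms by (simp add: prime_factors_product prime_prime_factors)
  moreover have "p \<notin> prime_factors e" using assms(2) by (auto simp: in_prime_factors_iff)
  ultimately show ?thesis using assms by (simp add: moebius_mu_def)
qed

lemma abs_moebius_mu_le: "\<bar>moebius_mu k\<bar> \<le> 1"
  by (simp add: moebius_mu_def)

lemma moebius_mu_eq_0_if_prime_square_dvd:
  assumes "prime p" "p * p dvd d"
  shows "moebius_mu d = 0"
proof -
  have "\<not> squarefree d"
    using assms unfolding squarefree_def by (metis not_prime_unit power2_eq_square)
  then show ?thesis by (simp add: moebius_mu_def)
qed

lemma divisors_exactly_divisible_by_prime:
  fixes n p :: nat
  assumes "prime p" "p dvd n"
  shows "{d. d dvd n \<and> p dvd d \<and> \<not> p * p dvd d} = (\<lambda>e. p * e) ` {e. e dvd n \<and> \<not> p dvd e}"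
proof (intro equalityI subsetI)
  fix d assume d: "d \<in> {d. d dvd n \<and> p dvd d \<and> \<not> p * p dvd d}"
  then obtain e where "d = p * e" by blast
  with d show "d \<in> (\<lambda>e. p * e) ` {e. e dvd n \<and> \<not> p dvd e}" by (auto intro: dvd_mult_right)
next
  fix d assume "d \<in> (\<lambda>e. p * e) ` {e. e dvd n \<and> \<not> p dvd e}"
  then obtain e where e: "d = p * e" "e dvd n" "\<not> p dvd e" by auto
  then have "p * e dvd n" using assms by (simp add: divides_mult prime_imp_coprime)
  moreover have "\<not> p * p dvd p * e" using e assms by (auto simp: prime_gt_0_nat)
  ultimately show "d \<in> {d. d dvd n \<and> p dvd d \<and> \<not> p * p dvd d}" using e by auto
qed

lemma sum_moebius_mu_divisors:
  fixes n :: nat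
  assumes "n > 0"
  shows "(\<Sum>d\<in>{d. d dvd n}. moebius_mu d) = (if n = 1 then 1 else 0)"
proof (cases "n = 1")
  case True
  then have "{d. d dvd n} = {1}" by auto
  then show ?thesis using True by (simp add: moebius_mu_def)
next
  case False
  obtain p where p: "prime p" "p dvd n" using prime_factor_nat[OF False] by blast
  define A where "A = {e. e dvd n \<and> \<not> p dvd e}"
  define B where "B = {d. d dvd n \<and> p dvd d}"
  have fin: "finite A" "finite B" using assms unfolding A_def B_def by auto
  have "sum moebius_mu B = sum moebius_mu {d. d dvd n \<and> p dvd d \<and> \<not> p * p dvd d}"
    using fin(2) moebius_mu_eq_0_if_prime_square_dvd[OF p(1)] unfolding B_def
    by (intro sum.mono_neutral_right) auto
  also have "\<dots> = sum (\<lambda>e. moebius_mu (p * e)) A"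
    unfolding divisors_exactly_divisible_by_prime[OF p] A_def using p(1)
    by (intro sum.reindex[unfolded comp_def]) (simp add: inj_on_def prime_gt_0_nat)
  also have "\<dots> = - sum moebius_mu A"
    using p assms by (auto simp: A_def sum_negf[symmetric] intro!: sum.cong moebius_mu_prime_mult Nat.gr0I)
  finally have "sum moebius_mu A + sum moebius_mu B = 0" by simp
  moreover have "sum moebius_mu A + sum moebius_mu B = sum moebius_mu {d. d dvd n}"
    using fin by (subst sum.union_disjoint[symmetric]) (auto simp: A_def B_def intro!: sum.cong)
  ultimately show ?thesis using False by simp
qed

lemma sum_moebius_mu_common_divisors:
  fixes a c N :: nat
  assumes "0 < a" "0 < c" "a \<le> N"
  shows "(\<Sum>k=1..N. if k dvd a \<and> k dvd c then moebius_mu k else 0) = (if coprime a c then 1 else 0)"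
proof -
  have "{k\<in>{1..N}. k dvd gcd a c} = {k. k dvd gcd a c}"
    using assms by (auto intro: Nat.gr0I dest: dvd_imp_le[of _ a])
  then have "(\<Sum>k=1..N. if k dvd a \<and> k dvd c then moebius_mu k else 0)
      = (\<Sum>k\<in>{k. k dvd gcd a c}. moebius_mu k)"
    by (simp add: sum.inter_filter[symmetric])
  also have "\<dots> = (if gcd a c = 1 then 1 else 0)"
    using assms by (intro sum_moebius_mu_divisors) simp
  finally show ?thesis by (simp add: coprime_iff_gcd_eq_1)
qed

lemma sum_multiples_eq:
  fixes g :: "nat \<Rightarrow> 'a::comm_monoid_add"
  assumes "0 < k" and vanish: "\<And>n. N < n \<Longrightarrow> g n = 0"
  shows "(\<Sum>a=1..N. g (k * a)) = (\<Sum>a=1..N. if k dvd a then g a else 0)"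
proof -
  have "(\<Sum>a=1..N. g (k * a)) = (\<Sum>a\<in>{a\<in>{1..N}. k * a \<le> N}. g (k * a))"
    using vanish by (intro sum.mono_neutral_right) (auto, metis not_le)
  also have "\<dots> = (\<Sum>a\<in>(\<lambda>a. k * a) ` {a\<in>{1..N}. k * a \<le> N}. g a)"
    using assms(1) by (intro sum.reindex[symmetric, unfolded comp_def]) (auto simp: inj_on_def)
  also have "(\<lambda>a. k * a) ` {a\<in>{1..N}. k * a \<le> N} = {a\<in>{1..N}. k dvd a}"
  proof (intro equalityI subsetI)
    fix a assume "a \<in> {a\<in>{1..N}. k dvd a}"
    then obtain b where b: "a = k * b" "1 \<le> a" "a \<le> N" by auto
    then have "1 \<le> b" "b \<le> N" using assms(1) by (auto intro: Nat.gr0I order_trans[OF _ b(3)])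
    with b show "a \<in> (\<lambda>a. k * a) ` {a\<in>{1..N}. k * a \<le> N}" by (intro image_eqI[of _ _ b]) auto
  qed (use assms(1) in auto)
  finally show ?thesis using sum.inter_filter[of "{1..N}" g "\<lambda>a. k dvd a"] by simp
qed

lemma double_sum_multiples_eq:
  fixes \<Phi> :: "nat \<Rightarrow> nat \<Rightarrow> 'a::comm_monoid_add"
  assumes "0 < k" and vanish: "\<And>a c. N < a \<or> N < c \<Longrightarrow> \<Phi> a c = 0"
  shows "(\<Sum>a=1..N. \<Sum>c=1..N. \<Phi> (k * a) (k * c))
    = (\<Sum>a=1..N. \<Sum>c=1..N. if k dvd a \<and> k dvd c then \<Phi> a c else 0)"
proof -
  have "(\<Sum>a=1..N. \<Sum>c=1..N. \<Phi> (k * a) (k * c))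
      = (\<Sum>a=1..N. \<Sum>c=1..N. if k dvd c then \<Phi> (k * a) c else 0)"
    using assms by (intro sum.cong refl sum_multiples_eq) auto
  also have "\<dots> = (\<Sum>a=1..N. if k dvd a then (\<Sum>c=1..N. if k dvd c then \<Phi> a c else 0) else 0)"
    using assms by (intro sum_multiples_eq sum.neutral) auto
  also have "\<dots> = (\<Sum>a=1..N. \<Sum>c=1..N. if k dvd a \<and> k dvd c then \<Phi> a c else 0)"
    by (intro sum.cong refl) auto
  finally show ?thesis .
qed

lemma sum_coprime_moebius:
  fixes \<Phi> :: "nat \<Rightarrow> nat \<Rightarrow> real" and N :: nat
  assumes vanish: "\<And>a c. N < a \<or> N < c \<Longrightarrow> \<Phi> a c = 0"
  shows "(\<Sum>a=1..N. \<Sum>c=1..N. if coprime a c then \<Phi> a c else 0)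
       = (\<Sum>k=1..N. moebius_mu k * (\<Sum>a=1..N. \<Sum>c=1..N. \<Phi> (k * a) (k * c)))"
proof -
  have multiples: "(\<Sum>a=1..N. \<Sum>c=1..N. \<Phi> (k * a) (k * c))
      = (\<Sum>a=1..N. \<Sum>c=1..N. if k dvd a \<and> k dvd c then \<Phi> a c else 0)" if "0 < k" for k
    by (rule double_sum_multiples_eq) (use that vanish in auto)
  have "(\<Sum>k=1..N. moebius_mu k * (\<Sum>a=1..N. \<Sum>c=1..N. \<Phi> (k * a) (k * c)))
      = (\<Sum>k=1..N. \<Sum>a=1..N. \<Sum>c=1..N. (if k dvd a \<and> k dvd c then moebius_mu k else 0) * \<Phi> a c)"
  proof (intro sum.cong refl)
    fix k :: nat assume "k \<in> {1..N}"
    then have "0 < k" by simp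
    then show "moebius_mu k * (\<Sum>a=1..N. \<Sum>c=1..N. \<Phi> (k * a) (k * c))
        = (\<Sum>a=1..N. \<Sum>c=1..N. (if k dvd a \<and> k dvd c then moebius_mu k else 0) * \<Phi> a c)"
      unfolding multiples[OF \<open>0 < k\<close>] sum_distrib_left by (intro sum.cong refl) auto
  qed
  also have "\<dots> = (\<Sum>a=1..N. \<Sum>c=1..N. \<Sum>k=1..N. (if k dvd a \<and> k dvd c then moebius_mu k else 0) * \<Phi> a c)"
    by (subst sum.swap) (intro sum.cong refl sum.swap)
  also have "\<dots> = (\<Sum>a=1..N. \<Sum>c=1..N. if coprime a c then \<Phi> a c else 0)"
  proof (intro sum.cong refl)
    fix a c assume "a \<in> {1..N}" "c \<in> {1..N}"
    then have "(\<Sum>k=1..N. if k dvd a \<and> k dvd c then moebius_mu k else 0) = (if coprime a c then 1 else 0)"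
      by (intro sum_moebius_mu_common_divisors) auto
    then show "(\<Sum>k=1..N. (if k dvd a \<and> k dvd c then moebius_mu k else 0) * \<Phi> a c)
        = (if coprime a c then \<Phi> a c else 0)"
      by (simp add: sum_distrib_right[symmetric])
  qed
  finally show ?thesis ..
qed

section \<open>Tails of series\<close>

lemma sum_inverse_consecutive_products:
  "n \<le> M \<Longrightarrow> (\<Sum>k\<in>{n<..M}. 1 / (real k * (real k + 1))) = 1 / (real n + 1) - 1 / (real M + 1)"
proof (induction M)
  case (Suc M)
  show ?case
  proof (cases "n = Suc M")
    case False
    with Suc.prems have "n \<le> M" by simp
    moreover have "{n<..Suc M} = insert (Suc M) {n<..M}" using \<open>n \<le> M\<close> by auto
    moreover have "1 / (real (Suc M) * (real (Suc M) + 1)) = 1 / (real M + 1) - 1 / (real (Suc M) + 1)"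
      by (simp add: field_simps)
    ultimately show ?thesis using Suc.IH by simp
  qed simp
qed simp

lemma inverse_square_tail_bound:
  fixes f :: "nat \<Rightarrow> real"
  assumes bound: "\<And>k. 1 \<le> k \<Longrightarrow> \<bar>f k\<bar> \<le> K / (real k)\<^sup>2"
  shows "f summable_on {n<..}" and "\<bar>\<Sum>\<^sub>\<infinity>k\<in>{n<..}. f k\<bar> \<le> 2 * K / (real n + 1)"
proof -
  define g where "g k = 2 * K / (real k * (real k + 1))" for k
  have K: "0 \<le> K" using bound[of 1] by (auto intro: order_trans[OF abs_ge_zero])
  have g_nonneg: "0 \<le> g k" for k unfolding g_def using K by simp
  have g_finite: "sum g F \<le> 2 * K / (real n + 1)" if "finite F" "F \<subseteq> {n<..}" for F
  proof (cases "F = {}")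
    case False
    then obtain x where "x \<in> F" by blast
    then have "n < x" "x \<le> Max F" using that by auto
    then have "F \<subseteq> {n<..Max F}" "n \<le> Max F" using that by auto
    then have "sum g F \<le> sum g {n<..Max F}" using g_nonneg by (intro sum_mono2) auto
    also have "\<dots> = 2 * K * (1 / (real n + 1) - 1 / (real (Max F) + 1))"
      unfolding g_def sum_inverse_consecutive_products[OF \<open>n \<le> Max F\<close>, symmetric] sum_distrib_left
      by simp
    also have "\<dots> \<le> 2 * K / (real n + 1)" using K by (simp add: right_diff_distrib)
    finally show ?thesis .
  qed (use K in simp)
  have g_summable: "g summable_on {n<..}"
    using g_nonneg g_finite by (intro nonneg_bdd_above_summable_on bdd_aboveI) auto
  have f_le_g: "norm (f k) \<le> g k" if "k \<in> {n<..}" for k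
  proof -
    have "real k * (real k + 1) \<le> 2 * (real k)\<^sup>2" "0 < real k"
      using that by (auto simp: power2_eq_square)
    then have "2 * K / (2 * (real k)\<^sup>2) \<le> g k"
      unfolding g_def using K by (intro divide_left_mono) auto
    then show ?thesis using bound[of k] that by simp
  qed
  have f_abs_summable: "(\<lambda>k. norm (f k)) summable_on {n<..}"
    using summable_on_comparison_test[OF g_summable] f_le_g by auto
  then show "f summable_on {n<..}" by (rule abs_summable_summable)
  have "norm (\<Sum>\<^sub>\<infinity>k\<in>{n<..}. f k) \<le> (\<Sum>\<^sub>\<infinity>k\<in>{n<..}. norm (f k))"
    by (rule norm_infsum_bound[OF f_abs_summable])
  also have "\<dots> \<le> (\<Sum>\<^sub>\<infinity>k\<in>{n<..}. g k)" by (rule infsum_mono[OF f_abs_summable g_summable f_le_g])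
  also have "\<dots> \<le> 2 * K / (real n + 1)" using g_summable g_finite by (intro infsum_le_finite_sums) auto
  finally show "\<bar>\<Sum>\<^sub>\<infinity>k\<in>{n<..}. f k\<bar> \<le> 2 * K / (real n + 1)" by simp
qed

lemma harm_le_powr:
  fixes X \<epsilon> :: real
  assumes "real N \<le> 2 * X" "1 \<le> X" "0 < \<epsilon>"
  shows "harm N \<le> (2 + 1 / \<epsilon>) * X powr \<epsilon>"
proof (cases "N = 0")
  case False
  obtain n where n: "N = Suc n" using False not0_implies_Suc by blast
  have "harm (Suc n) - ln (real (Suc n)) \<le> (harm (Suc 0) - ln (real (Suc 0)) :: real)"
    using decseq_harm_diff_ln unfolding decseq_def by (metis le0 of_nat_Suc)
  then have "harm N \<le> 1 + ln (real N)" using n by (simp add: harm_expand)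
  also have "\<dots> \<le> 1 + ln (2 * X)" using assms False by simp
  also have "\<dots> = 1 + ln 2 + ln X" using assms by (simp add: ln_mult)
  also have "\<dots> \<le> 2 + X powr \<epsilon> / \<epsilon>"
    using ln_powr_bound[of X \<epsilon>] ln_2_less_1 assms(2,3) by simp
  also have "\<dots> \<le> (2 + 1 / \<epsilon>) * X powr \<epsilon>"
    using ge_one_powr_ge_zero[of X \<epsilon>] assms(2,3) by (simp add: field_simps)
  finally show ?thesis .
qed (use assms in \<open>simp add: harm_expand\<close>)

section \<open>The contribution of a single divisor\<close>

locale divisor_block =
  fixes V :: "real \<Rightarrow> real" and A X :: real and r :: int and l :: nat
  assumes V_vanish: "\<And>t. t \<notin> {1..2} \<Longrightarrow> V t = 0"
    and V_bound: "\<And>t. \<bar>V t\<bar> \<le> A"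
    and V_lipschitz: "A-lipschitz_on UNIV V"
    and A_ge_1: "1 \<le> A" and X_ge_2: "2 \<le> X"
    and r_bound: "\<bar>real_of_int r\<bar> \<le> 3 * X\<^sup>2"
    and l_divisor: "l \<in> pos_divisors r"
begin

definition r1 :: real where "r1 = real_of_int (r div int l)"

text \<open>Where \<open>psi a c x\<close> is nonzero, \<open>a \<ge> X / l\<close> and hence \<open>cut a = a\<close>; the cut-off makes
  \<open>1 / cut a\<close> bounded and Lipschitz on all of \<open>\<real>\<close>.\<close>
definition cut :: "real \<Rightarrow> real" where "cut a = max a (X / l)"

definition psi :: "real \<Rightarrow> real \<Rightarrow> real \<Rightarrow> real" where
  "psi a c x = V (real l * a / X) * V (real l * c / X) * V (x / X) * V ((r1 + x * c) / (cut a * X)) / cut a"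

lemma X_pos: "0 < X" and l_pos: "0 < real l" and q_pos: "0 < l / X"
  using X_ge_2 l_divisor by (auto simp: pos_divisors_def)

lemma r_eq: "real_of_int r = l * r1"
proof -
  have "r = int l * (r div int l)" using l_divisor by (simp add: pos_divisors_def)
  then show ?thesis unfolding r1_def by (metis of_int_mult of_int_of_nat_eq)
qed

lemma r1_bound: "\<bar>r1\<bar> \<le> 3 * X\<^sup>2 / l"
  using r_bound l_pos by (simp add: r_eq abs_mult field_simps)

lemma cut_ge: "X / l \<le> cut a" and cut_pos: "0 < cut a"
  using q_pos X_pos l_pos unfolding cut_def by (auto simp: less_max_iff_disj)

lemma cut_eq: "X / l \<le> a \<Longrightarrow> cut a = a"
  unfolding cut_def by simp

lemma abs_inverse_cut_le: "\<bar>1 / cut a\<bar> \<le> l / X"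
  using cut_ge[of a] cut_pos[of a] X_pos l_pos by (simp add: field_simps)

lemma inverse_cut_lipschitz:
  assumes "0 \<le> k"
  shows "(k * (l / X)\<^sup>2)-lipschitz_on UNIV (\<lambda>a. 1 / cut (k * a))"
proof (rule lipschitz_onI)
  fix a b :: real
  have "\<bar>cut (k * b) - cut (k * a)\<bar> \<le> \<bar>k * a - k * b\<bar>"
    unfolding cut_def by (auto simp: max_def)
  also have "\<dots> = k * \<bar>a - b\<bar>"
    using assms by (simp add: abs_mult right_diff_distrib[symmetric])
  finally have "\<bar>cut (k * b) - cut (k * a)\<bar> \<le> k * \<bar>a - b\<bar>" .
  moreover have "(X / l) * (X / l) \<le> cut (k * a) * cut (k * b)"
    using cut_ge cut_pos X_pos l_pos by (intro mult_mono) (auto intro: less_imp_le)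
  ultimately have "\<bar>cut (k * b) - cut (k * a)\<bar> / (cut (k * a) * cut (k * b)) \<le> k * \<bar>a - b\<bar> / ((X / l) * (X / l))"
    using X_pos l_pos assms by (intro frac_le) auto
  moreover have "1 / cut (k * a) - 1 / cut (k * b) = (cut (k * b) - cut (k * a)) / (cut (k * a) * cut (k * b))"
    using cut_pos[of "k * a"] cut_pos[of "k * b"] by (simp add: field_simps)
  ultimately show "dist (1 / cut (k * a)) (1 / cut (k * b)) \<le> k * (l / X)\<^sup>2 * dist a b"
    using cut_pos[of "k * a"] cut_pos[of "k * b"] X_pos l_pos
    by (simp add: dist_real_def abs_div power2_eq_square field_simps)
qed (use assms in simp)

lemma V_lipschitz_compose:
  "L-lipschitz_on UNIV u \<Longrightarrow> (A * L)-lipschitz_on UNIV (\<lambda>t. V (u t))"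
  using lipschitz_on_compose2[of L UNIV u A V] lipschitz_on_subset[OF V_lipschitz] by auto

lemma V_lipschitz_affine: "(A * \<bar>s\<bar>)-lipschitz_on UNIV (\<lambda>t. V (b + s * t))"
  by (intro V_lipschitz_compose lipschitz_on_affine_real)

lemma V_lipschitz_scaled: "(A * \<bar>s\<bar>)-lipschitz_on UNIV (\<lambda>t. V (s * t))"
  using V_lipschitz_affine[of s 0] by simp

lemma V_nonzero: "V (s / X) \<noteq> 0 \<Longrightarrow> X \<le> s \<and> s \<le> 2 * X"
  using V_vanish[of "s / X"] X_pos by (force simp: field_simps)

lemma psi_nonzero:
  assumes "psi a c x \<noteq> 0"
  shows "X / l \<le> a" "a \<le> 2 * X / l" "X / l \<le> c" "c \<le> 2 * X / l" "X \<le> x" "x \<le> 2 * X"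
proof -
  have "V (real l * a / X) \<noteq> 0" "V (real l * c / X) \<noteq> 0" "V (x / X) \<noteq> 0"
    using assms unfolding psi_def by auto
  then show "X / l \<le> a" "a \<le> 2 * X / l" "X / l \<le> c" "c \<le> 2 * X / l" "X \<le> x" "x \<le> 2 * X"
    using V_nonzero[of "real l * a"] V_nonzero[of "real l * c"] V_nonzero[of x] l_pos
    by (auto simp: field_simps)
qed

lemma abs_numerator_le:
  assumes "X / l \<le> c" "c \<le> 2 * X / l" "X \<le> x" "x \<le> 2 * X"
  shows "\<bar>r1 + x * c\<bar> \<le> 7 * X\<^sup>2 / l"
proof -
  have "0 \<le> X / l" using X_pos l_pos by simp
  with assms have "0 \<le> x * c" "x * c \<le> (2 * X) * (2 * X / l)"
    using X_pos by (simp, intro mult_mono, auto)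
  then show ?thesis using r1_bound by (simp add: power2_eq_square field_simps)
qed

lemma psi_bound: "\<bar>psi a c x\<bar> \<le> A ^ 4 * (l / X)"
proof -
  have "\<bar>psi a c x\<bar> = \<bar>V (real l * a / X)\<bar> * \<bar>V (real l * c / X)\<bar> * \<bar>V (x / X)\<bar>
      * \<bar>V ((r1 + x * c) / (cut a * X))\<bar> * \<bar>1 / cut a\<bar>"
    unfolding psi_def by (simp add: abs_mult abs_divide)
  also have "\<dots> \<le> A * A * A * A * (l / X)"
    using V_bound A_ge_1 abs_inverse_cut_le by (intro mult_mono) auto
  finally show ?thesis by (simp add: power4_eq_xxxx)
qed

lemma psi_lipschitz_first:
  assumes k: "0 < k"
  shows "(9 * A ^ 4 * k * (l / X)\<^sup>2)-lipschitz_on UNIV (\<lambda>a. psi (k * a) (k * c) x)"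
proof (cases "V (real l * (k * c) / X) * V (x / X) = 0")
  case True
  then have vanish: "(\<lambda>a. psi (k * a) (k * c) x) = (\<lambda>_. 0)" by (auto simp: psi_def)
  have "0 \<le> 9 * A ^ 4 * k * (l / X)\<^sup>2" using k by simp
  then show ?thesis unfolding vanish by (rule lipschitz_on_mono[OF lipschitz_on_constant subset_refl])
next
  case False
  define q where "q = real l / X"
  define p where "p = (r1 + x * (k * c)) / X"
  define K where "K = V (real l * (k * c) / X) * V (x / X)"
  define u where "u a = 1 / cut (k * a)" for a
  have q: "0 < q" unfolding q_def using q_pos .
  have "X / l \<le> k * c" "k * c \<le> 2 * X / l" "X \<le> x" "x \<le> 2 * X"
    using False V_nonzero[of "real l * (k * c)"] V_nonzero[of x] l_pos by (auto simp: field_simps)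
  then have "\<bar>r1 + x * (k * c)\<bar> \<le> 7 * X\<^sup>2 / l" by (rule abs_numerator_le)
  then have p: "\<bar>p\<bar> * q \<le> 7"
    unfolding p_def q_def using X_pos l_pos by (simp add: abs_div field_simps power2_eq_square)
  have K: "\<bar>K\<bar> \<le> A\<^sup>2"
    unfolding K_def abs_mult power2_eq_square using V_bound A_ge_1 by (intro mult_mono) auto
  have u: "(k * q\<^sup>2)-lipschitz_on UNIV u" "\<And>a. \<bar>u a\<bar> \<le> q"
    unfolding u_def q_def using k inverse_cut_lipschitz abs_inverse_cut_le by auto
  have V1: "(A * (k * q))-lipschitz_on UNIV (\<lambda>a. V (real l * k / X * a))"
    using V_lipschitz_scaled[of "real l * k / X"] k l_pos X_pos by (simp add: q_def abs_mult mult.commute)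
  have "(A * (\<bar>p\<bar> * (k * q\<^sup>2)))-lipschitz_on UNIV (\<lambda>a. V (p * u a))"
    by (intro V_lipschitz_compose lipschitz_on_cmult_real u)
  then have "(A * (\<bar>p\<bar> * (k * q\<^sup>2)) * q + A * (k * q\<^sup>2))-lipschitz_on UNIV (\<lambda>a. V (p * u a) * u a)"
    by (rule lipschitz_on_mult_bounded[OF _ u(1) V_bound u(2)])
  then have "(A * (k * q) * (A * q) + A * (A * (\<bar>p\<bar> * (k * q\<^sup>2)) * q + A * (k * q\<^sup>2)))-lipschitz_on UNIV
      (\<lambda>a. V (real l * k / X * a) * (V (p * u a) * u a))"
    using V_bound u(2) A_ge_1
    by (intro lipschitz_on_mult_bounded[OF V1]) (auto simp: abs_mult intro: mult_mono)
  then have "(\<bar>K\<bar> * ((A\<^sup>2 * k * q\<^sup>2) * (2 + \<bar>p\<bar> * q)))-lipschitz_on UNIV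
      (\<lambda>a. K * (V (real l * k / X * a) * (V (p * u a) * u a)))"
    by (rule lipschitz_on_cmult_real[THEN lipschitz_on_le])
      (simp add: algebra_simps power2_eq_square)
  moreover have "\<bar>K\<bar> * ((A\<^sup>2 * k * q\<^sup>2) * (2 + \<bar>p\<bar> * q)) \<le> A\<^sup>2 * ((A\<^sup>2 * k * q\<^sup>2) * 9)"
    using K p k q by (intro mult_mono) auto
  moreover have "K * (V (real l * k / X * a) * (V (p * u a) * u a)) = psi (k * a) (k * c) x" for a
    unfolding psi_def K_def u_def p_def by (simp add: field_simps)
  ultimately show ?thesis
    unfolding q_def by (auto elim!: lipschitz_on_le simp: power2_eq_square power4_eq_xxxx mult_ac)
qed

lemma psi_lipschitz_second:
  assumes k: "0 < k"
  shows "(3 * A ^ 4 * k * (l / X)\<^sup>2)-lipschitz_on UNIV (\<lambda>c. psi (k * z) (k * c) x)"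
proof (cases "V (real l * (k * z) / X) * V (x / X) = 0")
  case True
  then have vanish: "(\<lambda>c. psi (k * z) (k * c) x) = (\<lambda>_. 0)" by (auto simp: psi_def)
  have "0 \<le> 3 * A ^ 4 * k * (l / X)\<^sup>2" using k by simp
  then show ?thesis unfolding vanish by (rule lipschitz_on_mono[OF lipschitz_on_constant subset_refl])
next
  case False
  define q where "q = real l / X"
  define K where "K = V (real l * (k * z) / X) * V (x / X) * (1 / cut (k * z))"
  define s where "s = x * k / (cut (k * z) * X)"
  have q: "0 < q" unfolding q_def using q_pos .
  have "X / l \<le> k * z" "X \<le> x" "x \<le> 2 * X"
    using False V_nonzero[of "real l * (k * z)"] V_nonzero[of x] l_pos by (auto simp: field_simps)
  have "0 \<le> s" using \<open>X \<le> x\<close> k X_pos cut_pos[of "k * z"] unfolding s_def by simp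
  moreover have "s \<le> (2 * X * k) / ((X / l) * X)"
    unfolding s_def using \<open>x \<le> 2 * X\<close> k X_pos l_pos cut_ge[of "k * z"]
    by (intro frac_le mult_right_mono) auto
  ultimately have s: "\<bar>s\<bar> \<le> 2 * k * q"
    unfolding q_def using X_pos l_pos by (simp add: field_simps)
  have K: "\<bar>K\<bar> \<le> A\<^sup>2 * q"
    unfolding K_def q_def abs_mult power2_eq_square
    using V_bound A_ge_1 abs_inverse_cut_le[of "k * z"] by (intro mult_mono) auto
  have V1: "(A * (k * q))-lipschitz_on UNIV (\<lambda>c. V (real l * k / X * c))"
    using V_lipschitz_scaled[of "real l * k / X"] k l_pos X_pos by (simp add: q_def abs_mult mult.commute)
  note V2 = V_lipschitz_affine[of s "r1 / (cut (k * z) * X)"]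
  have "(\<bar>K\<bar> * (A * (k * q) * A + A * (A * \<bar>s\<bar>)))-lipschitz_on UNIV
      (\<lambda>c. K * (V (real l * k / X * c) * V (r1 / (cut (k * z) * X) + s * c)))"
    by (intro lipschitz_on_cmult_real lipschitz_on_mult_bounded[OF V1 V2 V_bound V_bound])
  moreover have "\<bar>K\<bar> * (A * (k * q) * A + A * (A * \<bar>s\<bar>)) \<le> (A\<^sup>2 * q) * (A\<^sup>2 * (3 * k * q))"
  proof (rule mult_mono[OF K])
    have "A * (A * \<bar>s\<bar>) \<le> A * (A * (2 * k * q))" using s A_ge_1 by (intro mult_left_mono) auto
    then show "A * (k * q) * A + A * (A * \<bar>s\<bar>) \<le> A\<^sup>2 * (3 * k * q)"
      by (simp add: power2_eq_square algebra_simps)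
  qed (use q k A_ge_1 in auto)
  moreover have "K * (V (real l * k / X * c) * V (r1 / (cut (k * z) * X) + s * c)) = psi (k * z) (k * c) x" for c
  proof -
    have "r1 / (cut (k * z) * X) + s * c = (r1 + x * (k * c)) / (cut (k * z) * X)"
      unfolding s_def by (simp add: add_divide_distrib)
    then show ?thesis unfolding psi_def K_def by (simp add: mult_ac)
  qed
  ultimately show ?thesis
    unfolding q_def by (auto elim!: lipschitz_on_le simp: power2_eq_square power4_eq_xxxx mult_ac)
qed

lemma psi_continuous_on [continuous_intros]:
  assumes "continuous_on S fa" "continuous_on S fc" "continuous_on S fx"
  shows "continuous_on S (\<lambda>p. psi (fa p) (fc p) (fx p))"
proof -
  have V: "continuous_on S f \<Longrightarrow> continuous_on S (\<lambda>p. V (f p))" for f :: "'a \<Rightarrow> real"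
    using continuous_on_compose2[OF lipschitz_on_continuous_on[OF V_lipschitz], of S f] by simp
  show ?thesis
    unfolding psi_def cut_def using X_pos cut_pos[unfolded cut_def]
    by (intro continuous_intros V assms) (auto simp: less_imp_neq[symmetric])
qed

definition n_max :: nat where "n_max = nat \<lfloor>2 * X / l\<rfloor>"

lemma n_max_le: "real n_max \<le> 2 * X / l"
  unfolding n_max_def using X_pos l_pos by (simp add: of_nat_nat)

lemma n_max_gt: "2 * X / l < real n_max + 1"
  unfolding n_max_def using X_pos l_pos by (simp add: of_nat_nat)

lemma psi_scaled_vanish:
  fixes k :: real
  assumes "0 < k" and "x \<notin> {X..2 * X} \<or> y \<notin> {X / (l * k)..2 * X / (l * k)} \<or> z \<notin> {X / (l * k)..2 * X / (l * k)}"
  shows "psi (k * z) (k * y) x = 0"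
  using assms psi_nonzero[of "k * z" "k * y" x] l_pos by (auto simp: field_simps)

lemma psi_lattice_error_pointwise:
  fixes k :: nat
  assumes k: "1 \<le> k" "real k \<le> 2 * X / l"
  shows "\<bar>(\<Sum>a=1..n_max. \<Sum>c=1..n_max. psi (real k * real a) (real k * real c) x)
      - (\<integral>y. (\<integral>z. psi (real k * z) (real k * y) x \<partial>lborel) \<partial>lborel)\<bar>
    \<le> 150 * A ^ 4 / k * indicator {X..2 * X} x"
proof (cases "x \<in> {X..2 * X}")
  case False
  then show ?thesis using psi_scaled_vanish[of "real k" x] k by simp
next
  case True
  define q where "q = real l / X"
  define \<alpha> where "\<alpha> = X / (l * k)"
  define \<beta> where "\<beta> = 2 * X / (l * k)"
  have kq: "k * q * (\<beta> - \<alpha>) = 1" "1 / 2 \<le> \<beta> - \<alpha>" "0 < \<alpha>"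
    unfolding q_def \<alpha>_def \<beta>_def using k X_pos l_pos by (simp_all add: field_simps)
  have "\<beta> \<le> 2 * X / l"
    unfolding \<beta>_def using k X_pos l_pos by (intro divide_left_mono) (auto simp: mult_le_cancel_left1)
  then have "\<bar>(\<Sum>a=1..n_max. \<Sum>c=1..n_max. psi (real k * real a) (real k * real c) x)
      - (\<integral>y. (\<integral>z. psi (real k * z) (real k * y) x \<partial>lborel) \<partial>lborel)\<bar>
    \<le> (15 * (9 * A ^ 4 * k * q\<^sup>2) + 5 * (3 * A ^ 4 * k * q\<^sup>2)) * (\<beta> - \<alpha>)\<^sup>2"
  proof (intro lipschitz_double_sum_integral_error[where g = "\<lambda>z y. psi (real k * z) (real k * y) x"])
    show "(9 * A ^ 4 * k * q\<^sup>2)-lipschitz_on UNIV (\<lambda>z. psi (real k * z) (real k * y) x)" for y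
      unfolding q_def using psi_lipschitz_first k by simp
    show "(3 * A ^ 4 * k * q\<^sup>2)-lipschitz_on UNIV (\<lambda>y. psi (real k * z) (real k * y) x)" for z
      unfolding q_def using psi_lipschitz_second k by simp
    show "psi (real k * z) (real k * y) x = 0" if "z \<notin> {\<alpha>..\<beta>} \<or> y \<notin> {\<alpha>..\<beta>}" for z y
      using that k unfolding \<alpha>_def \<beta>_def by (intro psi_scaled_vanish) auto
  qed (use n_max_gt kq in auto)
  also have "\<dots> = 150 * A ^ 4 / k * ((k * q * (\<beta> - \<alpha>))\<^sup>2)"
    using k by (simp add: power2_eq_square field_simps)
  finally show ?thesis using True kq(1) by simp
qed

definition psi_integral :: "real \<Rightarrow> real" where
  "psi_integral k = (\<integral>x. (\<integral>y. (\<integral>z. psi (k * z) (k * y) x \<partial>lborel) \<partial>lborel) \<partial>lborel)"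

definition psi_lattice_sum :: "nat \<Rightarrow> real" where
  "psi_lattice_sum k = (\<Sum>a=1..n_max. \<Sum>c=1..n_max. \<integral>x. psi (real k * real a) (real k * real c) x \<partial>lborel)"

lemma integrable_psi: "integrable lborel (\<lambda>x. psi a c x)"
  using psi_nonzero(5,6)[of a c]
  by (intro integrable_continuous_vanishing_outside_compact[of _ "{X..2 * X}"] continuous_intros)
    (auto simp: not_le[symmetric])

lemma psi_integral_iterated:
  fixes k :: real
  assumes k: "0 < k"
  shows "(\<integral>(x, y, z). psi (k * z) (k * y) x \<partial>(lborel :: (real \<times> real \<times> real) measure)) = psi_integral k"
    and "integrable lborel (\<lambda>x. \<integral>y. (\<integral>z. psi (k * z) (k * y) x \<partial>lborel) \<partial>lborel)"
proof -
  define I where "I = {X / (l * k)..2 * X / (l * k)}"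
  have vanish: "psi (k * z) (k * y) x = 0" if "x \<notin> {X..2 * X} \<or> y \<notin> I \<or> z \<notin> I" for x y z
    using psi_scaled_vanish[OF k] that unfolding I_def by blast
  have "integrable lborel (\<lambda>p::real \<times> real \<times> real. psi (k * snd (snd p)) (k * fst (snd p)) (fst p))"
  proof (rule integrable_continuous_vanishing_outside_compact[of _ "{X..2 * X} \<times> I \<times> I"])
    show "psi (k * snd (snd p)) (k * fst (snd p)) (fst p) = 0" if "p \<notin> {X..2 * X} \<times> I \<times> I" for p
      using vanish that by (cases p) auto
  qed (auto intro!: continuous_intros compact_Times simp: I_def)
  note triple = integral_lborel_pair_iterated[OF this]
  have "integrable lborel (\<lambda>q::real \<times> real. psi (k * snd q) (k * fst q) x)" for x
  proof (rule integrable_continuous_vanishing_outside_compact[of _ "I \<times> I"])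
    show "psi (k * snd q) (k * fst q) x = 0" if "q \<notin> I \<times> I" for q
      using vanish that by (cases q) auto
  qed (auto intro!: continuous_intros compact_Times simp: I_def)
  note double = integral_lborel_pair_iterated(1)[OF this]
  have "(\<lambda>(x, y, z). psi (k * z) (k * y) x) = (\<lambda>p::real \<times> real \<times> real. psi (k * snd (snd p)) (k * fst (snd p)) (fst p))"
    by (auto simp: fun_eq_iff)
  then show "(\<integral>(x, y, z). psi (k * z) (k * y) x \<partial>(lborel :: (real \<times> real \<times> real) measure)) = psi_integral k"
    using triple(1) double unfolding psi_integral_def by simp
  show "integrable lborel (\<lambda>x. \<integral>y. (\<integral>z. psi (k * z) (k * y) x \<partial>lborel) \<partial>lborel)"
    using triple(2) double by simp
qed

lemma psi_lattice_sum_error: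
  fixes k :: nat
  assumes "1 \<le> k" "real k \<le> 2 * X / l"
  shows "\<bar>psi_lattice_sum k - psi_integral k\<bar> \<le> 150 * A ^ 4 * X / k"
proof -
  have "psi_lattice_sum k - psi_integral k
      = (\<integral>x. (\<Sum>a=1..n_max. \<Sum>c=1..n_max. psi (real k * real a) (real k * real c) x)
          - (\<integral>y. (\<integral>z. psi (real k * z) (real k * y) x \<partial>lborel) \<partial>lborel) \<partial>lborel)"
    using psi_integral_iterated(2)[of "real k"] assms(1) unfolding psi_lattice_sum_def psi_integral_def
    by (simp add: integrable_psi integral_sum integrable_sum)
  also have "\<bar>\<dots>\<bar> \<le> (150 * A ^ 4 / k) * (2 * X - X)"
    by (rule abs_integral_le_indicator_bound)
      (use psi_lattice_error_pointwise[OF assms] X_pos in auto)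
  finally show ?thesis by simp
qed

lemma psi_integral_bound:
  fixes k :: real
  assumes k: "0 < k"
  shows "\<bar>psi_integral k\<bar> \<le> A ^ 4 * X\<^sup>2 / (l * k\<^sup>2)"
proof -
  define I where "I = {X / (l * k)..2 * X / (l * k)}"
  have I: "X / (l * k) \<le> 2 * X / (l * k)" "2 * X / (l * k) - X / (l * k) = X / (l * k)"
    using k X_pos l_pos by (auto intro: divide_right_mono)
  have vanish: "psi (k * z) (k * y) x = 0" if "x \<notin> {X..2 * X} \<or> y \<notin> I \<or> z \<notin> I" for x y z
    using psi_scaled_vanish[OF k] that unfolding I_def by blast
  have inner: "\<bar>\<integral>z. psi (k * z) (k * y) x \<partial>lborel\<bar> \<le> (A ^ 4 / k * indicator {X..2 * X} x) * indicator I y" for x y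
  proof (cases "x \<in> {X..2 * X} \<and> y \<in> I")
    case True
    have "\<bar>\<integral>z. psi (k * z) (k * y) x \<partial>lborel\<bar> \<le> (A ^ 4 * (l / X)) * (X / (l * k))"
      using abs_integral_le_indicator_bound[OF _ I(1), of "\<lambda>z. psi (k * z) (k * y) x" "A ^ 4 * (l / X)"]
        psi_bound vanish I(2) unfolding I_def by (force simp: indicator_def)
    with True show ?thesis using X_pos l_pos by (simp add: field_simps)
  qed (use vanish A_ge_1 k in auto)
  have middle: "\<bar>\<integral>y. (\<integral>z. psi (k * z) (k * y) x \<partial>lborel) \<partial>lborel\<bar>
      \<le> (A ^ 4 / k * (X / (l * k))) * indicator {X..2 * X} x" for x
    using abs_integral_le_indicator_bound[OF inner[unfolded I_def] I(1)] I(2) by (simp add: mult_ac)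
  have "\<bar>psi_integral k\<bar> \<le> (A ^ 4 / k * (X / (l * k))) * (2 * X - X)"
    unfolding psi_integral_def using X_pos by (intro abs_integral_le_indicator_bound[OF middle]) simp
  then show ?thesis by (simp add: power2_eq_square field_simps)
qed

lemma M_V_summand_eq:
  "1 / real a * V (real l * real a / X) * V (real l * real c / X) * Vhat0 V X (r div int l) a c
    = (\<integral>x. psi (real a) (real c) x \<partial>lborel)"
proof (cases "V (real l * real a / X) = 0")
  case True
  then show ?thesis by (simp add: psi_def)
next
  case False
  then have "cut (real a) = real a"
    using V_nonzero[of "real l * real a"] l_pos by (intro cut_eq) (simp add: field_simps)
  then have "psi (real a) (real c) x = (1 / real a * V (real l * real a / X) * V (real l * real c / X))
      * (V (x / X) * V ((r1 + x * real c) / (real a * X)))" for x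
    unfolding psi_def by simp
  then show ?thesis unfolding Vhat0_def r1_def by simp
qed

lemma main_integral_eq:
  fixes k :: nat
  assumes k: "0 < k"
  shows "main_integral V X r l k = k * psi_integral k"
proof -
  have "(1 / z) * V (x / X) * V (real l * real k * y / X) * V (real l * real k * z / X)
       * V ((real_of_int r + real l * real k * x * y) / (z * real l * real k * X))
       = k * psi (k * z) (k * y) x" for x y z :: real
  proof (cases "V (real l * real k * z / X) = 0")
    case True
    then show ?thesis by (simp add: psi_def mult.assoc)
  next
    case False
    then have "X / l \<le> k * z" using V_nonzero[of "real l * real k * z"] l_pos by (simp add: field_simps)
    moreover have "0 < X / l" using X_pos l_pos by simp
    ultimately have "cut (k * z) = k * z" "0 < real k * z" by (simp_all add: cut_eq)
    then have "cut (k * z) = k * z" "0 < z" using k by (simp_all add: zero_less_mult_iff)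
    moreover have "(real_of_int r + real l * real k * x * y) / (z * real l * real k * X)
        = (r1 + x * (k * y)) / (k * z * X)"
      unfolding r_eq using \<open>0 < z\<close> k l_pos X_pos by (simp add: field_simps)
    ultimately show ?thesis using k by (simp add: psi_def field_simps)
  qed
  then have "main_integral V X r l k
      = (\<integral>(x, y, z). k * psi (k * z) (k * y) x \<partial>(lborel :: (real \<times> real \<times> real) measure))"
    unfolding main_integral_def by simp
  also have "(\<lambda>(x::real, y::real, z::real). real k * psi (k * z) (k * y) x)
      = (\<lambda>p. real k * (\<lambda>(x::real, y::real, z::real). psi (k * z) (k * y) x) p)"
    by (auto simp: fun_eq_iff)
  also have "(\<integral>p. real k * (\<lambda>(x::real, y::real, z::real). psi (k * z) (k * y) x) p \<partial>lborel)
      = real k * (\<integral>(x, y, z). psi (k * z) (k * y) x \<partial>(lborel :: (real \<times> real \<times> real) measure))"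
    by (rule integral_mult_right_zero)
  finally show ?thesis using psi_integral_iterated(1)[of k] k by simp
qed

lemma coprime_sum_eq:
  "(\<Sum>\<^sub>\<infinity>(a, c)\<in>{(a, c). 1 \<le> a \<and> 1 \<le> c \<and> coprime a c}.
      1 / real a * V (real l * real a / X) * V (real l * real c / X) * Vhat0 V X (r div int l) a c)
    = (\<Sum>k=1..n_max. moebius_mu k * psi_lattice_sum k)"
proof -
  define \<Phi> where "\<Phi> a c = (\<integral>x. psi (real a) (real c) x \<partial>lborel)" for a c :: nat
  have \<Phi>_vanish: "\<Phi> a c = 0" if "n_max < a \<or> n_max < c" for a c
  proof -
    have "2 * X / l < real a \<or> 2 * X / l < real c" using that n_max_gt by auto
    then have "psi (real a) (real c) = (\<lambda>_. 0)" using psi_nonzero(2,4) by force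
    then show ?thesis unfolding \<Phi>_def by simp
  qed
  have "(\<Sum>\<^sub>\<infinity>(a, c)\<in>{(a, c). 1 \<le> a \<and> 1 \<le> c \<and> coprime a c}.
      1 / real a * V (real l * real a / X) * V (real l * real c / X) * Vhat0 V X (r div int l) a c)
    = (\<Sum>\<^sub>\<infinity>(a, c)\<in>{(a, c). 1 \<le> a \<and> 1 \<le> c \<and> coprime a c}. \<Phi> a c)"
    unfolding \<Phi>_def M_V_summand_eq ..
  also have "\<dots> = (\<Sum>\<^sub>\<infinity>(a, c)\<in>({1..n_max} \<times> {1..n_max}) \<inter> {(a, c). coprime a c}. \<Phi> a c)"
    by (intro infsum_cong_neutral) (auto, (metis \<Phi>_vanish not_le)+)
  also have "\<dots> = (\<Sum>(a, c)\<in>{1..n_max} \<times> {1..n_max}. if coprime a c then \<Phi> a c else 0)"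
    by (simp add: sum.inter_restrict case_prod_beta if_distrib)
  also have "\<dots> = (\<Sum>k=1..n_max. moebius_mu k * (\<Sum>a=1..n_max. \<Sum>c=1..n_max. \<Phi> (k * a) (k * c)))"
    unfolding sum.cartesian_product[symmetric] by (rule sum_coprime_moebius[OF \<Phi>_vanish])
  finally show ?thesis unfolding psi_lattice_sum_def \<Phi>_def by simp
qed

lemma main_sum_error:
  "\<bar>(\<Sum>\<^sub>\<infinity>k\<in>{k::nat. 1 \<le> k}. moebius_mu k / real k * main_integral V X r l k)
      - (\<Sum>k=1..n_max. moebius_mu k * psi_integral k)\<bar> \<le> A ^ 4 * X"
proof -
  define f where "f k = moebius_mu k * psi_integral k" for k :: nat
  define K where "K = A ^ 4 * X\<^sup>2 / l"
  have f_bound: "\<bar>f k\<bar> \<le> K / (real k)\<^sup>2" if "1 \<le> k" for k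
  proof -
    have "\<bar>f k\<bar> \<le> 1 * (A ^ 4 * X\<^sup>2 / (l * (real k)\<^sup>2))"
      unfolding f_def abs_mult using abs_moebius_mu_le psi_integral_bound[of k] that
      by (intro mult_mono) auto
    then show ?thesis unfolding K_def by simp
  qed
  note tail = inverse_square_tail_bound[OF f_bound, of n_max]
  have "{k::nat. 1 \<le> k} = {1..n_max} \<union> {n_max<..}" by auto
  then have "(\<Sum>\<^sub>\<infinity>k\<in>{k::nat. 1 \<le> k}. f k) = (\<Sum>k=1..n_max. f k) + (\<Sum>\<^sub>\<infinity>k\<in>{n_max<..}. f k)"
    using tail(1) by (simp only:) (subst infsum_Un_disjoint, auto)
  moreover have "(\<Sum>\<^sub>\<infinity>k\<in>{k::nat. 1 \<le> k}. moebius_mu k / real k * main_integral V X r l k)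
      = (\<Sum>\<^sub>\<infinity>k\<in>{k::nat. 1 \<le> k}. f k)"
    by (intro infsum_cong) (simp add: f_def main_integral_eq)
  moreover have "2 * K / (real n_max + 1) \<le> 2 * K / (2 * X / l)"
    using n_max_gt X_pos l_pos unfolding K_def by (intro divide_left_mono) auto
  moreover have "2 * K / (2 * X / l) = A ^ 4 * X"
    unfolding K_def using X_pos l_pos by (simp add: field_simps power2_eq_square)
  ultimately show ?thesis using tail(2) unfolding f_def by simp
qed

lemma lattice_sums_error:
  assumes "0 < \<epsilon>"
  shows "\<bar>\<Sum>k=1..n_max. moebius_mu k * (psi_lattice_sum k - psi_integral k)\<bar>
    \<le> 150 * A ^ 4 * (2 + 1 / \<epsilon>) * X powr (1 + \<epsilon>)"
proof -
  have "\<bar>\<Sum>k=1..n_max. moebius_mu k * (psi_lattice_sum k - psi_integral k)\<bar>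
      \<le> (\<Sum>k=1..n_max. 150 * A ^ 4 * X * inverse (real k))"
  proof (rule order_trans[OF sum_abs sum_mono])
    fix k assume k: "k \<in> {1..n_max}"
    then have "real k \<le> 2 * X / l" using n_max_le by (simp add: order_trans)
    then have "\<bar>moebius_mu k\<bar> * \<bar>psi_lattice_sum k - psi_integral k\<bar> \<le> 1 * (150 * A ^ 4 * X / k)"
      using k abs_moebius_mu_le psi_lattice_sum_error by (intro mult_mono) auto
    then show "\<bar>moebius_mu k * (psi_lattice_sum k - psi_integral k)\<bar> \<le> 150 * A ^ 4 * X * inverse (real k)"
      by (simp add: abs_mult divide_inverse)
  qed
  also have "\<dots> = 150 * A ^ 4 * X * harm n_max"
    by (simp add: harm_def sum_distrib_left)
  also have "\<dots> \<le> 150 * A ^ 4 * X * ((2 + 1 / \<epsilon>) * X powr \<epsilon>)"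
    using n_max_le l_pos X_ge_2 A_ge_1 assms
    by (intro mult_left_mono harm_le_powr) (auto intro: order_trans simp: divide_le_eq)
  also have "\<dots> = 150 * A ^ 4 * (2 + 1 / \<epsilon>) * X powr (1 + \<epsilon>)"
    using X_pos by (simp add: powr_add)
  finally show ?thesis .
qed

lemma divisor_block_error:
  assumes "0 < \<epsilon>"
  shows "\<bar>(\<Sum>\<^sub>\<infinity>(a, c)\<in>{(a, c). 1 \<le> a \<and> 1 \<le> c \<and> coprime a c}.
        1 / real a * V (real l * real a / X) * V (real l * real c / X) * Vhat0 V X (r div int l) a c)
      - (\<Sum>\<^sub>\<infinity>k\<in>{k::nat. 1 \<le> k}. moebius_mu k / real k * main_integral V X r l k)\<bar>
    \<le> (150 * A ^ 4 * (2 + 1 / \<epsilon>) + A ^ 4) * X powr (1 + \<epsilon>)"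
proof -
  have "X \<le> X powr (1 + \<epsilon>)"
    using X_ge_2 assms by (simp add: powr_add ge_one_powr_ge_zero)
  then have "A ^ 4 * X \<le> A ^ 4 * X powr (1 + \<epsilon>)" using A_ge_1 by (intro mult_left_mono) auto
  moreover have "(\<Sum>k=1..n_max. moebius_mu k * psi_lattice_sum k) - T
      = (\<Sum>k=1..n_max. moebius_mu k * (psi_lattice_sum k - psi_integral k))
        - (T - (\<Sum>k=1..n_max. moebius_mu k * psi_integral k))" for T
    by (simp add: sum_subtractf right_diff_distrib)
  ultimately show ?thesis
    unfolding coprime_sum_eq using lattice_sums_error[OF assms] main_sum_error
    by (simp add: distrib_right)
qed

end

lemma card_pos_divisors:
  assumes "r \<noteq> 0"
  shows "card (pos_divisors r) = divisor_tau (nat \<bar>r\<bar>)"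
proof -
  have "0 < l \<and> int l dvd r \<longleftrightarrow> l dvd nat \<bar>r\<bar>" for l :: nat
    using assms by (auto simp flip: of_nat_dvd_iff intro: Nat.gr0I)
  then show ?thesis unfolding pos_divisors_def divisor_tau_def by simp
qed

theorem proposition4p1:
  fixes V :: "real \<Rightarrow> real" and \<epsilon> :: real
  assumes "smooth_fun V"
    and "\<And>t. t \<notin> {1..2} \<Longrightarrow> V t = 0"
    and "\<epsilon> > 0"
  shows "\<exists>C. \<forall>X::real. \<forall>r::int. X \<ge> 2 \<and> r \<noteq> 0 \<and> real_of_int \<bar>r\<bar> \<le> 3 * X\<^sup>2 \<longrightarrow>
           \<bar>M_V V X r - main_term V X r\<bar> \<le> C * real (divisor_tau (nat \<bar>r\<bar>)) * X powr (1 + \<epsilon>)"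
proof -
  obtain A where A: "1 \<le> A" "\<And>t. \<bar>V t\<bar> \<le> A" "A-lipschitz_on UNIV V"
    using smooth_compact_support_bounded_lipschitz[OF assms(1,2)] by blast
  define C where "C = 150 * A ^ 4 * (2 + 1 / \<epsilon>) + A ^ 4"
  show ?thesis
  proof (intro exI[of _ C] allI impI)
    fix X :: real and r :: int
    assume H: "X \<ge> 2 \<and> r \<noteq> 0 \<and> real_of_int \<bar>r\<bar> \<le> 3 * X\<^sup>2"
    then have "divisor_block V A X r l" if "l \<in> pos_divisors r" for l
      using assms(2) A that by unfold_locales auto
    note block_error = divisor_block.divisor_block_error[OF this assms(3)]
    have "\<bar>M_V V X r - main_term V X r\<bar> \<le> (\<Sum>l\<in>pos_divisors r. C * X powr (1 + \<epsilon>))"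
      unfolding M_V_def main_term_def sum_subtractf[symmetric] C_def
      by (intro order_trans[OF sum_abs sum_mono] block_error)
    also have "\<dots> = C * real (divisor_tau (nat \<bar>r\<bar>)) * X powr (1 + \<epsilon>)"
      using card_pos_divisors H by simp
    finally show "\<bar>M_V V X r - main_term V X r\<bar> \<le> C * real (divisor_tau (nat \<bar>r\<bar>)) * X powr (1 + \<epsilon>)" .
  qed
qed

end
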